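(* Let $n,s,k$ be integers with $0\le s\le n$ and $n\ge k>1$. Then $F_{s,k}(n)=(-1)^k F_{n-s,k}(n)$.
   Context: For an integer $j\ge0$, $\binom{x}{j}=x(x-1)\cdots(x-j+1)/j!$ as a polynomial in $x$, and $\binom{x}{j}=0$ for $j<0$. For integers $s\ge1$, $k\ge1$, the Moser polynomial is $F_{s,k}(x)=\sum_{p=1}^{s}(-1)^{p-1}p^{k-1}\binom{x}{s-p}$; for integers $s<1$ set $F_{s,k}\equiv0$. *)

theory Defs
  imports Complex_Main
begin

definition binom_int :: "'a::field_char_0 \<Rightarrow> int \<Rightarrow> 'a" where
  "binom_int x j = (if j < 0 then 0 else x gchoose (nat j))"

definition moserF :: "int \<Rightarrow> nat \<Rightarrow> 'a::field_char_0 \<Rightarrow> 'a" where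
  "moserF s k x = (if s < 1 then 0 else
     (\<Sum>p\<in>{1..s}. (-1) ^ nat (p - 1) * of_int p ^ (k - 1) * binom_int x (s - p)))"

end

theory Submission imports Defs begin

text \<open>
  For \<open>m < n\<close> the \<open>n\<close>-th backward difference
  \<open>\<Sum>j\<le>n. (-1)^j * (n choose j) * (a - j)^m\<close> of \<open>x^m\<close> vanishes.
  Take \<open>a = s\<close> and \<open>m = k - 1 > 0\<close>: the summand \<open>j = s\<close> is zero, the summands
  \<open>j < s\<close> are F_{s,k}(n) up to sign (substitute \<open>p = s - j\<close>), and after
  substituting \<open>j = n - i\<close> the summands \<open>j > s\<close> are F_{n-s,k}(n) up to sign.
\<close>

definition backward_diff_power :: "nat \<Rightarrow> nat \<Rightarrow> 'a::comm_ring_1 \<Rightarrow> 'a" where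
  "backward_diff_power n m a = (\<Sum>j\<le>n. (-1)^j * of_nat (n choose j) * (a - of_nat j)^m)"

lemma backward_diff_power_Suc:
  "backward_diff_power (Suc n) (Suc m) a =
     a * backward_diff_power (Suc n) m a + of_nat (Suc n) * backward_diff_power n m (a - 1)"
proof -
  let ?h = "\<lambda>j. (-1)^j * of_nat (Suc n choose j) * of_nat j * (a - of_nat j)^m"
  have "backward_diff_power (Suc n) (Suc m) a
        = (\<Sum>j\<le>Suc n. a * ((-1)^j * of_nat (Suc n choose j) * (a - of_nat j)^m) - ?h j)"
    unfolding backward_diff_power_def by (intro sum.cong) (auto simp: algebra_simps)
  also have "\<dots> = a * backward_diff_power (Suc n) m a - (\<Sum>j\<le>Suc n. ?h j)"
    unfolding backward_diff_power_def by (simp only: sum_subtractf sum_distrib_left)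
  also have "(\<Sum>j\<le>Suc n. ?h j) = (\<Sum>i\<le>n. ?h (Suc i))"
    by (simp only: sum.atMost_Suc_shift) simp
  also have "\<dots> = - (of_nat (Suc n) * backward_diff_power n m (a - 1))"
    unfolding backward_diff_power_def sum_distrib_left sum_negf[symmetric]
  proof (intro sum.cong refl)
    fix i
    have "of_nat (Suc n choose Suc i) * of_nat (Suc i) = (of_nat (Suc n) * of_nat (n choose i) :: 'a)"
      by (metis Suc_times_binomial mult.commute of_nat_mult)
    moreover have "?h (Suc i) = - ((-1)^i * (of_nat (Suc n choose Suc i) * of_nat (Suc i)) * (a - 1 - of_nat i)^m)"
      by (simp add: algebra_simps del: binomial_Suc_Suc)
    ultimately show "?h (Suc i) = - (of_nat (Suc n) * ((-1)^i * of_nat (n choose i) * (a - 1 - of_nat i)^m))"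
      by (simp add: algebra_simps del: binomial_Suc_Suc)
  qed
  finally show ?thesis by simp
qed

lemma backward_diff_power_eq_0:
  assumes "m < n"
  shows "backward_diff_power n m a = 0"
  using assms
proof (induction m arbitrary: n a)
  case 0
  then show ?case
    by (simp add: backward_diff_power_def choose_alternating_sum)
next
  case (Suc m)
  then obtain n' where "n = Suc n'" and "m < n'"
    by (metis Suc_lessE)
  then show ?case
    by (simp add: backward_diff_power_Suc Suc.IH)
qed

definition partial_backward_diff_power :: "nat \<Rightarrow> nat \<Rightarrow> nat \<Rightarrow> 'a::comm_ring_1" where
  "partial_backward_diff_power n m S =
     (\<Sum>j<S. (-1)^j * of_nat (n choose j) * (of_nat S - of_nat j)^m)"

lemma backward_diff_power_split:
  assumes "S \<le> n" and "0 < m"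
  shows "backward_diff_power n m (of_nat S :: 'a::comm_ring_1) =
           partial_backward_diff_power n m S + (-1)^(n + m) * partial_backward_diff_power n m (n - S)"
proof -
  let ?f = "\<lambda>j. (-1)^j * of_nat (n choose j) * (of_nat S - of_nat j :: 'a)^m"
  have tail: "?f (n - i) = (-1)^(n + m) * ((-1)^i * of_nat (n choose i) * (of_nat (n - S) - of_nat i)^m)"
    if "i < n - S" for i
  proof -
    have "i \<le> n" using that by simp
    have "(-1::'a)^(n - i) = (-1)^n * (-1)^i"
      unfolding power_add[symmetric] by (rule neg_one_power_add_eq_neg_one_power_diff[symmetric]) fact
    moreover have "(of_nat S - of_nat (n - i) :: 'a)^m = (-1)^m * (of_nat (n - S) - of_nat i)^m"
      using that assms(1) by (simp add: of_nat_diff power_minus[symmetric] algebra_simps)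
    moreover have "n choose (n - i) = n choose i"
      using binomial_symmetric[OF \<open>i \<le> n\<close>] by simp
    ultimately have "?f (n - i) = ((-1)^n * (-1)^i) * of_nat (n choose i) * ((-1)^m * (of_nat (n - S) - of_nat i)^m)"
      by (simp only:)
    then show ?thesis
      by (simp only: power_add mult_ac)
  qed
  have "{..n} = insert S ({..<S} \<union> {Suc S..n})"
    using assms(1) by auto
  then have "backward_diff_power n m (of_nat S :: 'a) = ?f S + (sum ?f {..<S} + sum ?f {Suc S..n})"
    unfolding backward_diff_power_def by (simp, subst sum.union_disjoint) auto
  also have "?f S = 0"
    using assms(2) by (simp add: zero_power)
  also have "sum ?f {Suc S..n} = (\<Sum>i<n - S. ?f (n - i))"
    by (rule sum.reindex_bij_witness[of _ "\<lambda>i. n - i" "\<lambda>j. n - j"]) auto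
  also have "\<dots> = (-1)^(n + m) * partial_backward_diff_power n m (n - S)"
    unfolding partial_backward_diff_power_def sum_distrib_left by (rule sum.cong[OF refl tail]) simp
  finally show ?thesis
    by (simp add: partial_backward_diff_power_def)
qed

lemma moserF_of_nat:
  "moserF (int S) k (of_nat n :: 'a::field_char_0) =
     - ((-1)^S * partial_backward_diff_power n (k - 1) S)"
proof (cases "S = 0")
  case True
  then show ?thesis
    by (simp add: moserF_def partial_backward_diff_power_def)
next
  case False
  let ?g = "\<lambda>p. (-1) ^ nat (p - 1) * of_int p ^ (k - 1) * binom_int (of_nat n :: 'a) (int S - p)"
  have summand: "?g (int S - int j) =
      - ((-1)^S * ((-1)^j * of_nat (n choose j) * (of_nat S - of_nat j)^(k - 1)))"
    if "j < S" for j
  proof -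
    have "(-1::'a) ^ nat (int S - int j - 1) = - ((-1)^S * (-1)^j)"
      using that neg_one_power_add_eq_neg_one_power_diff[of "Suc j" S, where 'a='a]
      by (simp add: nat_diff_distrib power_add)
    moreover have "binom_int (of_nat n :: 'a) (int S - (int S - int j)) = of_nat (n choose j)"
      by (simp add: binom_int_def binomial_gbinomial)
    ultimately show ?thesis
      using that by (simp add: of_nat_diff)
  qed
  have "moserF (int S) k (of_nat n :: 'a) = (\<Sum>p\<in>{1..int S}. ?g p)"
    using False by (simp add: moserF_def)
  also have "\<dots> = (\<Sum>j<S. ?g (int S - int j))"
    by (rule sum.reindex_bij_witness[of _ "\<lambda>j. int S - int j" "\<lambda>p. nat (int S - p)"]) auto
  also have "\<dots> = - ((-1)^S * partial_backward_diff_power n (k - 1) S)"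
    unfolding partial_backward_diff_power_def sum_distrib_left sum_negf[symmetric]
    by (rule sum.cong[OF refl summand]) simp
  finally show ?thesis .
qed

lemma partial_backward_diff_power_reflect:
  assumes "S \<le> n" and "0 < m" and "m < n"
  shows "partial_backward_diff_power n m S =
           - ((-1)^(n + m) * (partial_backward_diff_power n m (n - S) :: 'a::comm_ring_1))"
  using backward_diff_power_split[OF assms(1,2), where 'a='a]
    backward_diff_power_eq_0[OF assms(3), where 'a='a]
  by (simp add: eq_neg_iff_add_eq_0)

theorem mainTheorem19:
  fixes n s :: int and k :: nat
  assumes "0 \<le> s" and "s \<le> n" and "int k \<le> n" and "k > 1"
  shows "moserF s k (of_int n :: real) = (-1) ^ k * moserF (n - s) k (of_int n :: real)"
proof -
  obtain S N where s: "s = int S" and n: "n = int N" and "S \<le> N"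
    using assms(1,2) by (metis nonneg_int_cases order_trans zle_int)
  define m where "m = k - 1"
  have k: "k = Suc m" and "0 < m" and "m < N"
    using assms(3,4) n by (simp_all add: m_def)
  let ?P = "partial_backward_diff_power N m :: nat \<Rightarrow> real"
  have "moserF s k (of_int n :: real) = - ((-1)^S * ?P S)"
    using moserF_of_nat[of S k N, where 'a=real] by (simp add: s n k)
  also have "\<dots> = (-1)^S * (-1)^(N + m) * ?P (N - S)"
    using partial_backward_diff_power_reflect[OF \<open>S \<le> N\<close> \<open>0 < m\<close> \<open>m < N\<close>, where 'a=real]
    by simp
  also have "(-1::real)^S * (-1)^(N + m) = (-1)^k * - ((-1)^(N - S))"
    using neg_one_power_add_eq_neg_one_power_diff[OF \<open>S \<le> N\<close>, where 'a=real]
    by (simp add: k power_add mult.commute)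
  also have "(-1)^k * - ((-1)^(N - S)) * ?P (N - S) = (-1) ^ k * moserF (n - s) k (of_int n :: real)"
    using moserF_of_nat[of "N - S" k N, where 'a=real] \<open>S \<le> N\<close> by (simp add: s n k of_nat_diff)
  finally show ?thesis .
qed

end
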